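(* There exist maps $t\mapsto\Gamma_t\in\mathbb{R}^{p\times p}$, with $\Gamma_t$ a continuous-time interconnection for each $t$, and $Q:\mathbb{R}\to\overline{\mathcal Q}_n$ such that the system $\dot{\mathbf x}=(\Gamma_t\otimes Q_t)\mathbf x$ has an unbounded solution.
   Context: $\otimes$ is the Kronecker product; $\overline{\mathcal Q}_n$ is the set of symmetric positive semidefinite $n\times n$ matrices with induced 2-norm at most $1$. A continuous-time interconnection is $\Gamma=[\gamma_{ij}]$ with $\gamma_{ij}\ge0$ for $i\ne j$ and $\gamma_{ii}=-\sum_{j\ne i}\gamma_{ij}$. *)

theory Defs
  imports "HOL-Analysis.Analysis"
begin

(* Matrices of size m x m are represented as nat => nat => real, only entries with
   indices < m are meaningful; vectors of length m as nat => real. *)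

definition ct_interconnection :: "nat \<Rightarrow> (nat \<Rightarrow> nat \<Rightarrow> real) \<Rightarrow> bool" where
  "ct_interconnection p G \<longleftrightarrow>
     (\<forall>i<p. \<forall>j<p. i \<noteq> j \<longrightarrow> G i j \<ge> 0) \<and>
     (\<forall>i<p. G i i = - (\<Sum>j\<in>{..<p} - {i}. G i j))"

definition Qbar :: "nat \<Rightarrow> (nat \<Rightarrow> nat \<Rightarrow> real) set" where
  "Qbar n = {Q. (\<forall>k<n. \<forall>l<n. Q k l = Q l k) \<and>
     (\<forall>v::nat\<Rightarrow>real. (\<Sum>k<n. \<Sum>l<n. v k * Q k l * v l) \<ge> 0) \<and>
     (\<forall>v::nat\<Rightarrow>real. (\<Sum>k<n. (\<Sum>l<n. Q k l * v l)\<^sup>2) \<le> (\<Sum>k<n. (v k)\<^sup>2))}"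

(* Kronecker product of a p x p matrix A with an n x n matrix B (a pn x pn matrix),
   row index i*n+k, column index j*n+l *)
definition kron :: "nat \<Rightarrow> (nat \<Rightarrow> nat \<Rightarrow> real) \<Rightarrow> (nat \<Rightarrow> nat \<Rightarrow> real) \<Rightarrow> nat \<Rightarrow> nat \<Rightarrow> real" where
  "kron n A B r c = A (r div n) (c div n) * B (r mod n) (c mod n)"

(* x is a (Caratheodory / integral-form) solution on [0,\<infinity>) of x' = M(t) x, dimension m *)
definition is_solution :: "nat \<Rightarrow> (real \<Rightarrow> nat \<Rightarrow> nat \<Rightarrow> real) \<Rightarrow> (real \<Rightarrow> nat \<Rightarrow> real) \<Rightarrow> bool" where
  "is_solution m M x \<longleftrightarrow>
     (\<forall>t\<ge>0. \<forall>r<m. ((\<lambda>s. \<Sum>c<m. M s r c * x s c) has_integral (x t r - x 0 r)) {0..t})"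

end

theory Submission
  imports Defs
begin

text \<open>Two agents in the plane. Their disagreement d(t) = (1 + exp(-t))(cos t, sin t)
spirals slowly towards 0, so d' \<cdot> d < 0 and the rank-one projection Q(t) onto d'(t) is
admissible. With nonnegative coupling rates proportional to \<lambda> and 1 - \<lambda>, where
\<lambda>(t) = (1 + cos t)/2, the first agent moves with velocity \<lambda> d' and the second with
(\<lambda> - 1) d'. The disagreement is then correctly transported, but the second
coordinate of \<lambda> d' has mean 1/4 over a period, so both agents drift off to infinity.\<close>

definition rank_one_proj :: "real \<Rightarrow> real \<Rightarrow> nat \<Rightarrow> nat \<Rightarrow> real" where
  "rank_one_proj a b k l = (if k = 0 then a else b) * (if l = 0 then a else b) / (a\<^sup>2 + b\<^sup>2)"

definition two_agent :: "real \<Rightarrow> real \<Rightarrow> nat \<Rightarrow> nat \<Rightarrow> real" where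
  "two_agent a b i j =
     (if i = 0 then (if j = 0 then - a else if j = 1 then a else 0)
      else if i = 1 then (if j = 0 then b else if j = 1 then - b else 0) else 0)"

lemma ct_interconnection_two_agent:
  assumes "a \<ge> 0" "b \<ge> 0"
  shows "ct_interconnection 2 (two_agent a b)"
  using assms unfolding ct_interconnection_def two_agent_def
  by (auto simp: less_2_cases_iff insert_Diff_if lessThan_def eval_nat_numeral)

lemma kron_two_agent_rank_one_proj:
  fixes x :: "nat \<Rightarrow> real" and u v a b :: real
  defines "w \<equiv> (u * (x 2 - x 0) + v * (x 3 - x 1)) / (u\<^sup>2 + v\<^sup>2)"
  assumes "r < 4"
  shows "(\<Sum>c<4. kron 2 (two_agent a b) (rank_one_proj u v) r c * x c) =
           (if r < 2 then a * w else - b * w) * (if even r then u else v)"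
proof -
  have four: "{..<(4::nat)} = {0,1,2,3}" by auto
  from assms(2) consider "r = 0" | "r = 1" | "r = 2" | "r = 3" by linarith
  then show ?thesis
    by cases (simp_all add: four kron_def two_agent_def rank_one_proj_def w_def
        add_divide_distrib diff_divide_distrib algebra_simps)
qed

lemma rank_one_proj_Qbar:
  assumes "a\<^sup>2 + b\<^sup>2 > 0"
  shows "rank_one_proj a b \<in> Qbar 2"
proof -
  have quad: "(\<Sum>k<2. \<Sum>l<2. v k * rank_one_proj a b k l * v l) = (a * v 0 + b * v 1)\<^sup>2 / (a\<^sup>2 + b\<^sup>2)"
    for v :: "nat \<Rightarrow> real"
    unfolding rank_one_proj_def
    by (simp add: eval_nat_numeral power2_eq_square algebra_simps add_divide_distrib)
  have image: "(\<Sum>k<2. (\<Sum>l<2. rank_one_proj a b k l * v l)\<^sup>2) = (a * v 0 + b * v 1)\<^sup>2 / (a\<^sup>2 + b\<^sup>2)"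
    for v :: "nat \<Rightarrow> real"
  proof -
    have row: "(\<Sum>l<2. rank_one_proj a b k l * v l) = (if k = 0 then a else b) * (a * v 0 + b * v 1) / (a\<^sup>2 + b\<^sup>2)"
      for k :: nat
      unfolding rank_one_proj_def by (simp add: eval_nat_numeral algebra_simps add_divide_distrib)
    have "(a\<^sup>2 + b\<^sup>2) * (a * v 0 + b * v 1)\<^sup>2 / (a\<^sup>2 + b\<^sup>2)\<^sup>2 = (a * v 0 + b * v 1)\<^sup>2 / (a\<^sup>2 + b\<^sup>2)"
      using assms by (simp add: power2_eq_square[of "a\<^sup>2 + b\<^sup>2"])
    then show ?thesis
      unfolding row by (simp add: eval_nat_numeral power_divide power_mult_distrib add_divide_distrib algebra_simps)
  qed
  have cauchy_schwarz: "(a * v 0 + b * v 1)\<^sup>2 / (a\<^sup>2 + b\<^sup>2) \<le> (\<Sum>k<2. (v k)\<^sup>2)"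
    for v :: "nat \<Rightarrow> real"
  proof -
    have "(a\<^sup>2 + b\<^sup>2) * ((v 0)\<^sup>2 + (v 1)\<^sup>2) - (a * v 0 + b * v 1)\<^sup>2 = (a * v 1 - b * v 0)\<^sup>2"
      by (simp add: power2_eq_square algebra_simps)
    then have "(a * v 0 + b * v 1)\<^sup>2 \<le> (a\<^sup>2 + b\<^sup>2) * ((v 0)\<^sup>2 + (v 1)\<^sup>2)"
      by (metis diff_ge_0_iff_ge zero_le_power2)
    with assms show ?thesis by (simp add: eval_nat_numeral divide_le_eq mult.commute)
  qed
  have "\<forall>k<2. \<forall>l<2. rank_one_proj a b k l = rank_one_proj a b l k"
    by (simp add: rank_one_proj_def)
  then show ?thesis
    unfolding Qbar_def mem_Collect_eq quad image using cauchy_schwarz by simp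
qed

lemma is_solution_if_has_real_derivative:
  assumes "\<And>t r. 0 \<le> t \<Longrightarrow> r < m \<Longrightarrow>
             ((\<lambda>s. x s r) has_real_derivative (\<Sum>c<m. M t r c * x t c)) (at t within {0..})"
  shows "is_solution m M x"
  unfolding is_solution_def
proof (intro allI impI)
  fix t :: real and r
  assume "0 \<le> t" "r < m"
  show "((\<lambda>s. \<Sum>c<m. M s r c * x s c) has_integral x t r - x 0 r) {0..t}"
  proof (rule fundamental_theorem_of_calculus[OF \<open>0 \<le> t\<close>])
    fix s assume "s \<in> {0..t}"
    with assms \<open>r < m\<close> have "((\<lambda>s. x s r) has_real_derivative (\<Sum>c<m. M s r c * x s c)) (at s within {0..})"
      by auto
    then show "((\<lambda>s. x s r) has_vector_derivative (\<Sum>c<m. M s r c * x s c)) (at s within {0..t})"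
      by (auto simp: has_real_derivative_iff_has_vector_derivative intro: has_vector_derivative_within_subset)
  qed
qed

definition dis_x :: "real \<Rightarrow> real" where "dis_x t = (1 + exp (- t)) * cos t"
definition dis_y :: "real \<Rightarrow> real" where "dis_y t = (1 + exp (- t)) * sin t"
definition vel_x :: "real \<Rightarrow> real" where "vel_x t = - exp (- t) * cos t - (1 + exp (- t)) * sin t"
definition vel_y :: "real \<Rightarrow> real" where "vel_y t = - exp (- t) * sin t + (1 + exp (- t)) * cos t"
definition lam :: "real \<Rightarrow> real" where "lam t = (1 + cos t) / 2"

text \<open>Closed-form primitives of \<lambda> \<cdot> vel_x and \<lambda> \<cdot> vel_y; the secular term t/4 in
pos_y is the mean of \<lambda> \<cdot> vel_y over a period.\<close>

definition pos_x :: "real \<Rightarrow> real" where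
  "pos_x t = (2 * cos t + cos t * cos t + 2 * exp (- t) * cos t
     + exp (- t) * (3 * cos t * cos t - 3 * sin t * sin t - 2 * sin t * cos t) / 5 + exp (- t)) / 4"
definition pos_y :: "real \<Rightarrow> real" where
  "pos_y t = (2 * sin t + sin t * cos t + t + 2 * exp (- t) * sin t
     + exp (- t) * (6 * sin t * cos t + cos t * cos t - sin t * sin t) / 5 - exp (- t)) / 4"

text \<open>The gain makes gain \<cdot> Q(-d) = vel, using vel \<cdot> d = -exp(-t)(1 + exp(-t)).\<close>

definition gain :: "real \<Rightarrow> real" where
  "gain t = ((vel_x t)\<^sup>2 + (vel_y t)\<^sup>2) / (exp (- t) * (1 + exp (- t)))"

definition Gamma_ex :: "real \<Rightarrow> nat \<Rightarrow> nat \<Rightarrow> real" where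
  "Gamma_ex t = two_agent (lam t * gain t) ((1 - lam t) * gain t)"
definition Q_ex :: "real \<Rightarrow> nat \<Rightarrow> nat \<Rightarrow> real" where
  "Q_ex t = rank_one_proj (vel_x t) (vel_y t)"
definition x_ex :: "real \<Rightarrow> nat \<Rightarrow> real" where
  "x_ex t r = (if r = 0 then pos_x t else if r = 1 then pos_y t
     else if r = 2 then pos_x t - dis_x t else pos_y t - dis_y t)"

lemma dis_x_deriv: "(dis_x has_real_derivative vel_x t) (at t)"
  unfolding dis_x_def [abs_def] vel_x_def by (rule derivative_eq_intros refl | simp)+

lemma dis_y_deriv: "(dis_y has_real_derivative vel_y t) (at t)"
  unfolding dis_y_def [abs_def] vel_y_def by (rule derivative_eq_intros refl | simp)+

lemma pos_x_deriv: "(pos_x has_real_derivative lam t * vel_x t) (at t)"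
  unfolding pos_x_def [abs_def] lam_def vel_x_def
  apply (rule derivative_eq_intros refl | simp)+
  apply (simp add: field_simps)
  using sin_cos_squared_add [of t] unfolding power2_eq_square by algebra

lemma pos_y_deriv: "(pos_y has_real_derivative lam t * vel_y t) (at t)"
  unfolding pos_y_def [abs_def] lam_def vel_y_def
  apply (rule derivative_eq_intros refl | simp)+
  apply (simp add: field_simps)
  using sin_cos_squared_add [of t] unfolding power2_eq_square by algebra

lemma vel_dot_dis: "vel_x t * dis_x t + vel_y t * dis_y t = - (exp (- t) * (1 + exp (- t)))"
  unfolding vel_x_def vel_y_def dis_x_def dis_y_def
  using sin_cos_squared_add [of t] unfolding power2_eq_square by algebra

lemma vel_norm_pos: "(vel_x t)\<^sup>2 + (vel_y t)\<^sup>2 > 0"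
proof -
  have "(vel_x t)\<^sup>2 + (vel_y t)\<^sup>2 = (exp (- t))\<^sup>2 + (1 + exp (- t))\<^sup>2"
    unfolding vel_x_def vel_y_def
    using sin_cos_squared_add [of t] unfolding power2_eq_square by algebra
  moreover have "(1 + exp (- t))\<^sup>2 > 0"
    by (smt (verit) exp_gt_zero zero_less_power2)
  ultimately show ?thesis
    by (simp add: add_nonneg_pos)
qed

lemma lam_bounds: "0 \<le> lam t" "lam t \<le> 1"
  using cos_ge_minus_one [of t] cos_le_one [of t]
  by (simp_all add: lam_def field_simps del: cos_ge_minus_one)

lemma gain_pos: "gain t > 0"
  unfolding gain_def using vel_norm_pos [of t] by (smt (verit) divide_pos_pos exp_gt_zero mult_pos_pos)

lemma ct_interconnection_Gamma_ex: "ct_interconnection 2 (Gamma_ex t)"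
  unfolding Gamma_ex_def
  using lam_bounds [of t] gain_pos [of t] by (intro ct_interconnection_two_agent) simp_all

lemma Q_ex_Qbar: "Q_ex t \<in> Qbar 2"
  unfolding Q_ex_def using vel_norm_pos by (rule rank_one_proj_Qbar)

lemma state_field:
  assumes "r < 4"
  shows "(\<Sum>c<4. kron 2 (Gamma_ex t) (Q_ex t) r c * x_ex t c) =
           (if r < 2 then lam t else lam t - 1) * (if even r then vel_x t else vel_y t)"
proof -
  have "vel_x t * (x_ex t 2 - x_ex t 0) + vel_y t * (x_ex t 3 - x_ex t 1) = exp (- t) * (1 + exp (- t))"
    using vel_dot_dis [of t] by (simp add: x_ex_def algebra_simps)
  then have "(vel_x t * (x_ex t 2 - x_ex t 0) + vel_y t * (x_ex t 3 - x_ex t 1)) /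
      ((vel_x t)\<^sup>2 + (vel_y t)\<^sup>2) = 1 / gain t"
    by (simp add: gain_def)
  then show ?thesis
    unfolding Gamma_ex_def Q_ex_def kron_two_agent_rank_one_proj [OF assms]
    using gain_pos [of t] by (simp add: algebra_simps)
qed

lemma state_deriv:
  assumes "r < 4"
  shows "((\<lambda>s. x_ex s r) has_real_derivative
           (if r < 2 then lam t else lam t - 1) * (if even r then vel_x t else vel_y t)) (at t)"
proof -
  from assms consider "r = 0" | "r = 1" | "r = 2" | "r = 3" by linarith
  then show ?thesis
  proof cases
    case 3
    show ?thesis using DERIV_diff [OF pos_x_deriv dis_x_deriv] by (simp add: 3 x_ex_def algebra_simps)
  next
    case 4
    show ?thesis using DERIV_diff [OF pos_y_deriv dis_y_deriv] by (simp add: 4 x_ex_def algebra_simps)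
  qed (simp_all add: x_ex_def pos_x_deriv pos_y_deriv)
qed

lemma is_solution_x_ex: "is_solution (2 * 2) (\<lambda>t. kron 2 (Gamma_ex t) (Q_ex t)) x_ex"
  by (rule is_solution_if_has_real_derivative)
    (simp add: state_field has_field_derivative_at_within state_deriv)

lemma pos_y_lower_bound:
  assumes "t \<ge> 0"
  shows "(t - 8) / 4 \<le> pos_y t"
proof -
  have e: "0 < exp (- t)" "exp (- t) \<le> 1"
    using assms by auto
  have sin_cos: "\<bar>sin t\<bar> \<le> 1" "\<bar>sin t * cos t\<bar> \<le> 1" "\<bar>6 * sin t * cos t\<bar> \<le> 6"
    by (simp_all add: abs_mult mult_le_one)
  have "sin t * sin t + cos t * cos t = 1"
    using sin_cos_squared_add [of t] by (simp add: power2_eq_square)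
  then have "\<bar>6 * sin t * cos t + cos t * cos t - sin t * sin t\<bar> \<le> 8"
    using sin_cos(3) zero_le_square [of "sin t"] zero_le_square [of "cos t"]
    unfolding abs_le_iff by linarith
  then have oscillation: "\<bar>exp (- t) * (6 * sin t * cos t + cos t * cos t - sin t * sin t)\<bar> \<le> 8"
    using mult_mono [OF e(2) _ zero_le_one abs_ge_zero] e(1) by (simp add: abs_mult)
  have drift: "\<bar>2 * exp (- t) * sin t\<bar> \<le> 2"
    using e sin_cos by (simp add: abs_mult mult_le_one)
  have "t - 8 \<le> 2 * sin t + sin t * cos t + t + 2 * exp (- t) * sin t
      + exp (- t) * (6 * sin t * cos t + cos t * cos t - sin t * sin t) / 5 - exp (- t)"
    using abs_le_D2 [OF sin_cos(1)] abs_le_D2 [OF sin_cos(2)] abs_le_D2 [OF oscillation]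
      abs_le_D2 [OF drift] e(2)
    by linarith
  then show ?thesis
    unfolding pos_y_def by (simp add: divide_right_mono)
qed

theorem theorem6:
  shows "\<exists>(p::nat) (n::nat) (\<Gamma>::real \<Rightarrow> nat \<Rightarrow> nat \<Rightarrow> real) (Q::real \<Rightarrow> nat \<Rightarrow> nat \<Rightarrow> real)
           (x::real \<Rightarrow> nat \<Rightarrow> real).
     (\<forall>t. ct_interconnection p (\<Gamma> t)) \<and> (\<forall>t. Q t \<in> Qbar n) \<and>
     is_solution (p * n) (\<lambda>t. kron n (\<Gamma> t) (Q t)) x \<and>
     \<not> (\<exists>B. \<forall>t\<ge>0. \<forall>r<p * n. \<bar>x t r\<bar> \<le> B)"
proof (intro exI conjI)
  show "\<forall>t. ct_interconnection 2 (Gamma_ex t)" "\<forall>t. Q_ex t \<in> Qbar 2"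
    by (simp_all add: ct_interconnection_Gamma_ex Q_ex_Qbar)
  show "is_solution (2 * 2) (\<lambda>t. kron 2 (Gamma_ex t) (Q_ex t)) x_ex"
    by (rule is_solution_x_ex)
  show "\<not> (\<exists>B. \<forall>t\<ge>0. \<forall>r<2 * 2. \<bar>x_ex t r\<bar> \<le> B)"
  proof
    assume "\<exists>B. \<forall>t\<ge>0. \<forall>r<2 * 2. \<bar>x_ex t r\<bar> \<le> B"
    then obtain B where "\<forall>t\<ge>0. \<forall>r<2 * 2. \<bar>x_ex t r\<bar> \<le> B" ..
    then have "\<bar>x_ex (4 * \<bar>B\<bar> + 12) 1\<bar> \<le> B" by simp
    then have "pos_y (4 * \<bar>B\<bar> + 12) \<le> B" by (simp add: x_ex_def)
    moreover have "pos_y (4 * \<bar>B\<bar> + 12) \<ge> \<bar>B\<bar> + 1"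
      using pos_y_lower_bound [of "4 * \<bar>B\<bar> + 12"] by simp
    ultimately show False by linarith
  qed
qed

end
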